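(* Let $\Omega\subseteq\mathbb{R}^n$ be open, $U\in\mathcal{G}_c(\Omega)$, and let $\Gamma$ be a closed cone contained in the complement of $\Sigma_g(U)$. Let $u$ be a compactly supported representative of $U$. Then there exists $N$ such that for every $p\in\mathbb{N}_0$ there exists $M\in\mathbb{N}_0$ such that for every $\phi\in\mathcal{A}_M(\mathbb{R}^n)$ there exist $c>0$ and $\varepsilon_0>0$ with $$|\mathcal{F}(u(\phi_\varepsilon,\cdot))(\xi)|\le c\,\varepsilon^{-N}(1+|\xi|)^{-p}\qquad(\xi\in\Gamma,\ 0<\varepsilon<\varepsilon_0).$$
   Context: $\mathcal{A}_0(\mathbb{R})$ is the set of test functions on $\mathbb{R}$ with integral $1$; for $q\ge1$, $\mathcal{A}_q(\mathbb{R})$ consists of those $\phi\in\mathcal{A}_0(\mathbb{R})$ with $\int x^j\phi(x)\,dx=0$ for $1\le j\le q$; $\mathcal{A}_q(\mathbb{R}^n)$ is the set of tensor products $\phi\otimes\cdots\otimes\phi$ ($n$ factors) with $\phi\in\mathcal{A}_q(\mathbb{R})$. For $\phi\in\mathcal{D}(\mathbb{R}^n)$, $\phi_\varepsilon(x)=\varepsilon^{-n}\phi(x/\varepsilon)$. $\mathcal{E}_M(\Omega)$ is the set of maps $R:\mathcal{A}_0(\mathbb{R}^n)\times\Omega\to\mathbb{C}$, smooth in $x$, such that for all compact $K\subset\Omega$ and all $\alpha$ there is $N$ such that for all $\phi\in\mathcal{A}_N$ there are $c,\eta>0$ with $\sup_{x\in K}|\partial^\alpha R(\phi_\varepsilon,x)|\le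 c\varepsilon^{-N}$ for $0<\varepsilon<\eta$. $\mathcal{N}(\Omega)$ is the set of $R\in\mathcal{E}_M(\Omega)$ such that for all $K,\alpha$ and all $q\in\mathbb{N}$ there is $p$ such that for all $\phi\in\mathcal{A}_p$ there are $c,\eta>0$ with $\sup_{x\in K}|\partial^\alpha R(\phi_\varepsilon,x)|\le c\varepsilon^{q}$ for $0<\varepsilon<\eta$. The Colombeau algebra is $\mathcal{G}(\Omega)=\mathcal{E}_M(\Omega)/\mathcal{N}(\Omega)$; $\mathcal{G}_c(\Omega)$ is the subalgebra of compactly supported elements, which have representatives $u$ with $u(\phi,\cdot)$ supported in a fixed compact set. For $U\in\mathcal{G}_c$ with such a representative $u$, $\Sigma_g(U)\subseteq\mathbb{R}^n\setminus0$ is the complement of the set of $\xi_0\ne0$ possessing an open conic neighborhood $\Gamma_0$ such that: there is $N$ such that for all $p\in\mathbb{N}_0$ there is $M$ such that for all $\phi\in\mathcal{A}_M$ there are $c,\eta>0$ with $|\mathcal{F}(u(\phi_\varepsilon,\cdot))(\xi)|\le c\varepsilon^{-N}(1+|\xi|)^{-p}$ for $\xi\in\Gamma_0$, $0<\varepsilon<\eta$ (this is independent of the choice of representative). $\mathcal{F}$ denotes the Fourier transform. *)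

theory Defs
  imports "HOL-Analysis.Analysis"
begin

fun vder :: "nat \<Rightarrow> (real \<Rightarrow> complex) \<Rightarrow> real \<Rightarrow> complex" where
  "vder 0 f = f"
| "vder (Suc k) f = (\<lambda>x. vector_derivative (vder k f) (at x))"

definition test_fun1 :: "(real \<Rightarrow> complex) \<Rightarrow> bool" where
  "test_fun1 \<phi> \<longleftrightarrow> (\<forall>k x. vder k \<phi> differentiable (at x))
      \<and> (\<exists>K. compact K \<and> (\<forall>x. x \<notin> K \<longrightarrow> \<phi> x = 0))"

definition A1 :: "nat \<Rightarrow> (real \<Rightarrow> complex) set" where
  "A1 q = {\<phi>. test_fun1 \<phi> \<and> integral UNIV \<phi> = 1
      \<and> (\<forall>j. 1 \<le> j \<and> j \<le> q \<longrightarrow> integral UNIV (\<lambda>x. (x ^ j) *\<^sub>R \<phi> x) = 0)}"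

definition An :: "nat \<Rightarrow> (real ^ 'n \<Rightarrow> complex) set" where
  "An q = {\<lambda>x. \<Prod>i\<in>UNIV. \<phi> (x $ i) | \<phi>. \<phi> \<in> A1 q}"

definition scale :: "real \<Rightarrow> (real ^ 'n \<Rightarrow> complex) \<Rightarrow> real ^ 'n \<Rightarrow> complex" where
  "scale \<epsilon> \<phi> = (\<lambda>x. complex_of_real (\<epsilon> powr (- real CARD('n))) * \<phi> ((1/\<epsilon>) *\<^sub>R x))"

definition pdir :: "'n \<Rightarrow> (real ^ 'n \<Rightarrow> complex) \<Rightarrow> real ^ 'n \<Rightarrow> complex" where
  "pdir i f = (\<lambda>x. vector_derivative (\<lambda>t. f (x + t *\<^sub>R axis i 1)) (at 0))"

text \<open>Iterated partial derivative along a list of coordinate directions; a multi-index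
  alpha corresponds to any list containing each direction i exactly alpha(i) times.\<close>
fun pd :: "'n list \<Rightarrow> (real ^ 'n \<Rightarrow> complex) \<Rightarrow> real ^ 'n \<Rightarrow> complex" where
  "pd [] f = f"
| "pd (i # is) f = pdir i (pd is f)"

definition smooth_on_n :: "(real ^ 'n) set \<Rightarrow> (real ^ 'n \<Rightarrow> complex) \<Rightarrow> bool" where
  "smooth_on_n \<Omega> f \<longleftrightarrow> (\<forall>is. continuous_on \<Omega> (pd is f)
      \<and> (\<forall>x\<in>\<Omega>. \<forall>i. (\<lambda>t. pd is f (x + t *\<^sub>R axis i 1)) differentiable (at 0)))"

type_synonym 'n rep = "(real ^ 'n \<Rightarrow> complex) \<Rightarrow> real ^ 'n \<Rightarrow> complex"

definition EM :: "(real ^ 'n) set \<Rightarrow> 'n rep set" where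
  "EM \<Omega> = {R. (\<forall>\<phi>\<in>An 0. smooth_on_n \<Omega> (R \<phi>))
     \<and> (\<forall>K \<alpha>. compact K \<and> K \<subseteq> \<Omega> \<longrightarrow> (\<exists>N::nat. \<forall>\<phi>\<in>An N. \<exists>c>0. \<exists>\<eta>>0.
          \<forall>\<epsilon>. 0 < \<epsilon> \<and> \<epsilon> < \<eta> \<longrightarrow> (\<forall>x\<in>K. cmod (pd \<alpha> (R (scale \<epsilon> \<phi>)) x) \<le> c * \<epsilon> powr (- real N))))}"

definition comp_supp_rep :: "(real ^ 'n) set \<Rightarrow> 'n rep \<Rightarrow> bool" where
  "comp_supp_rep \<Omega> u \<longleftrightarrow> (\<exists>K. compact K \<and> K \<subseteq> \<Omega> \<and> (\<forall>\<phi>. \<forall>x\<in>\<Omega>. x \<notin> K \<longrightarrow> u \<phi> x = 0))"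

text \<open>Fourier transform of a function on Omega (extended by zero outside Omega).\<close>
definition fourier :: "(real ^ 'n) set \<Rightarrow> (real ^ 'n \<Rightarrow> complex) \<Rightarrow> real ^ 'n \<Rightarrow> complex" where
  "fourier \<Omega> f \<xi> = integral \<Omega> (\<lambda>x. f x * cis (- (x \<bullet> \<xi>)))"

definition open_conic_nbhd :: "(real ^ 'n) set \<Rightarrow> real ^ 'n \<Rightarrow> bool" where
  "open_conic_nbhd \<Gamma>0 \<xi>0 \<longleftrightarrow> open \<Gamma>0 \<and> \<xi>0 \<in> \<Gamma>0 \<and> 0 \<notin> \<Gamma>0
      \<and> (\<forall>\<xi>\<in>\<Gamma>0. \<forall>t>0. t *\<^sub>R \<xi> \<in> \<Gamma>0)"

definition decay_on :: "(real ^ 'n) set \<Rightarrow> 'n rep \<Rightarrow> (real ^ 'n) set \<Rightarrow> bool" where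
  "decay_on \<Omega> u \<Gamma> \<longleftrightarrow> (\<exists>N::nat. \<forall>p::nat. \<exists>M::nat. \<forall>\<phi>\<in>An M. \<exists>c>0. \<exists>\<eta>>0.
      \<forall>\<epsilon> \<xi>. 0 < \<epsilon> \<and> \<epsilon> < \<eta> \<and> \<xi> \<in> \<Gamma> \<longrightarrow>
        cmod (fourier \<Omega> (u (scale \<epsilon> \<phi>)) \<xi>) \<le> c * \<epsilon> powr (- real N) * (1 + norm \<xi>) powr (- real p))"

text \<open>Generalized wave front set (frequency part) Sigma_g(U), computed from a
  compactly supported representative u of U.\<close>
definition sigma_g :: "(real ^ 'n) set \<Rightarrow> 'n rep \<Rightarrow> (real ^ 'n) set" where
  "sigma_g \<Omega> u = {\<xi>0. \<xi>0 \<noteq> 0 \<and> \<not> (\<exists>\<Gamma>0. open_conic_nbhd \<Gamma>0 \<xi>0 \<and> decay_on \<Omega> u \<Gamma>0)}"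

end

theory Submission
  imports Defs
begin

text \<open>Every nonzero direction of \<open>\<Gamma>\<close> has an open conic neighbourhood on which the Fourier
  transforms decay; by compactness of the unit sphere inside the closed cone \<open>\<Gamma>\<close>, finitely many
  of them cover \<open>\<Gamma> - {0}\<close>. Decay estimates on finitely many sets combine into one by taking the
  maxima of the indices \<open>N\<close>, \<open>M\<close> and of the constants, and the remaining frequency
  \<open>\<xi> = 0\<close> is handled by the moderateness of \<open>u\<close> together with its compact support.\<close>

lemma An_antimono: "M' \<le> M \<Longrightarrow> An M \<subseteq> (An M' :: (real ^ 'n \<Rightarrow> complex) set)"
  unfolding An_def A1_def by fastforce

definition fourier_bound ::
    "(real ^ 'n) set \<Rightarrow> 'n rep \<Rightarrow> (real ^ 'n) set \<Rightarrow> nat \<Rightarrow> nat \<Rightarrow> (real ^ 'n \<Rightarrow> complex) \<Rightarrow> bool" where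
  "fourier_bound \<Omega> u \<Gamma> N p \<phi> \<longleftrightarrow> (\<exists>c>0. \<exists>\<eta>>0. \<forall>\<epsilon> \<xi>. 0 < \<epsilon> \<and> \<epsilon> < \<eta> \<and> \<xi> \<in> \<Gamma> \<longrightarrow>
      cmod (fourier \<Omega> (u (scale \<epsilon> \<phi>)) \<xi>) \<le> c * \<epsilon> powr (- real N) * (1 + norm \<xi>) powr (- real p))"

lemma decay_on_iff_fourier_bound:
  "decay_on \<Omega> u \<Gamma> \<longleftrightarrow> (\<exists>N. \<forall>p. \<exists>M. \<forall>\<phi>\<in>An M. fourier_bound \<Omega> u \<Gamma> N p \<phi>)"
  unfolding decay_on_def fourier_bound_def ..

lemma fourier_bound_mono_exponent:
  assumes "fourier_bound \<Omega> u \<Gamma> N p \<phi>" "N \<le> N'"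
  shows "fourier_bound \<Omega> u \<Gamma> N' p \<phi>"
proof -
  obtain c \<eta> where c: "c > 0" "\<eta> > 0" and bound: "\<And>\<epsilon> \<xi>. 0 < \<epsilon> \<Longrightarrow> \<epsilon> < \<eta> \<Longrightarrow> \<xi> \<in> \<Gamma> \<Longrightarrow>
      cmod (fourier \<Omega> (u (scale \<epsilon> \<phi>)) \<xi>) \<le> c * \<epsilon> powr (- real N) * (1 + norm \<xi>) powr (- real p)"
    using assms(1) unfolding fourier_bound_def by blast
  have bound': "cmod (fourier \<Omega> (u (scale \<epsilon> \<phi>)) \<xi>) \<le> c * \<epsilon> powr (- real N') * (1 + norm \<xi>) powr (- real p)"
    if "0 < \<epsilon>" "\<epsilon> < min \<eta> 1" "\<xi> \<in> \<Gamma>" for \<epsilon> \<xi>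
  proof -
    have "cmod (fourier \<Omega> (u (scale \<epsilon> \<phi>)) \<xi>) \<le> c * \<epsilon> powr (- real N) * (1 + norm \<xi>) powr (- real p)"
      using bound that by simp
    also have "\<dots> \<le> c * \<epsilon> powr (- real N') * (1 + norm \<xi>) powr (- real p)"
      using that assms(2) c by (intro mult_right_mono mult_left_mono powr_mono') auto
    finally show ?thesis .
  qed
  moreover have "min \<eta> 1 > 0"
    using c by simp
  ultimately show ?thesis
    unfolding fourier_bound_def using c by blast
qed

lemma fourier_bound_Un:
  assumes "fourier_bound \<Omega> u A N p \<phi>" "fourier_bound \<Omega> u B N p \<phi>"
  shows "fourier_bound \<Omega> u (A \<union> B) N p \<phi>"
proof -
  obtain c1 \<eta>1 where c1: "c1 > 0" "\<eta>1 > 0" and bound1: "\<And>\<epsilon> \<xi>. 0 < \<epsilon> \<Longrightarrow> \<epsilon> < \<eta>1 \<Longrightarrow> \<xi> \<in> A \<Longrightarrow>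
      cmod (fourier \<Omega> (u (scale \<epsilon> \<phi>)) \<xi>) \<le> c1 * \<epsilon> powr (- real N) * (1 + norm \<xi>) powr (- real p)"
    using assms(1) unfolding fourier_bound_def by blast
  obtain c2 \<eta>2 where c2: "c2 > 0" "\<eta>2 > 0" and bound2: "\<And>\<epsilon> \<xi>. 0 < \<epsilon> \<Longrightarrow> \<epsilon> < \<eta>2 \<Longrightarrow> \<xi> \<in> B \<Longrightarrow>
      cmod (fourier \<Omega> (u (scale \<epsilon> \<phi>)) \<xi>) \<le> c2 * \<epsilon> powr (- real N) * (1 + norm \<xi>) powr (- real p)"
    using assms(2) unfolding fourier_bound_def by blast
  have "cmod (fourier \<Omega> (u (scale \<epsilon> \<phi>)) \<xi>) \<le> max c1 c2 * \<epsilon> powr (- real N) * (1 + norm \<xi>) powr (- real p)"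
    if "0 < \<epsilon>" "\<epsilon> < min \<eta>1 \<eta>2" "\<xi> \<in> A \<union> B" for \<epsilon> \<xi>
  proof -
    have weaken: "c * \<epsilon> powr (- real N) * (1 + norm \<xi>) powr (- real p)
        \<le> max c1 c2 * \<epsilon> powr (- real N) * (1 + norm \<xi>) powr (- real p)" if "c \<le> max c1 c2" for c
      using that by (intro mult_right_mono) auto
    show ?thesis
    proof (cases "\<xi> \<in> A")
      case True
      then show ?thesis
        using order_trans[OF bound1[of \<epsilon> \<xi>] weaken[of c1]] that by auto
    next
      case False
      then show ?thesis
        using order_trans[OF bound2[of \<epsilon> \<xi>] weaken[of c2]] that by auto
    qed
  qed
  moreover have "max c1 c2 > 0" "min \<eta>1 \<eta>2 > 0"
    using c1 c2 by simp_all
  ultimately show ?thesis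
    unfolding fourier_bound_def by blast
qed

lemma decay_on_subset: "decay_on \<Omega> u A \<Longrightarrow> B \<subseteq> A \<Longrightarrow> decay_on \<Omega> u B"
  unfolding decay_on_def by (meson subsetD)

lemma decay_on_empty: "decay_on \<Omega> u {}"
  unfolding decay_on_def by (auto intro: exI[of _ 1])

lemma decay_on_Un:
  assumes "decay_on \<Omega> u A" "decay_on \<Omega> u B"
  shows "decay_on \<Omega> u (A \<union> B)"
proof -
  obtain N1 where N1: "\<And>p. \<exists>M. \<forall>\<phi>\<in>An M. fourier_bound \<Omega> u A N1 p \<phi>"
    using assms(1) unfolding decay_on_iff_fourier_bound by blast
  obtain N2 where N2: "\<And>p. \<exists>M. \<forall>\<phi>\<in>An M. fourier_bound \<Omega> u B N2 p \<phi>"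
    using assms(2) unfolding decay_on_iff_fourier_bound by blast
  have "\<exists>M. \<forall>\<phi>\<in>An M. fourier_bound \<Omega> u (A \<union> B) (max N1 N2) p \<phi>" for p
  proof -
    obtain M1 where M1: "\<And>\<phi>. \<phi> \<in> An M1 \<Longrightarrow> fourier_bound \<Omega> u A N1 p \<phi>"
      using N1 by blast
    obtain M2 where M2: "\<And>\<phi>. \<phi> \<in> An M2 \<Longrightarrow> fourier_bound \<Omega> u B N2 p \<phi>"
      using N2 by blast
    have "fourier_bound \<Omega> u (A \<union> B) (max N1 N2) p \<phi>" if "\<phi> \<in> An (max M1 M2)" for \<phi>
      using that An_antimono[of M1 "max M1 M2"] An_antimono[of M2 "max M1 M2"]
      by (intro fourier_bound_Un fourier_bound_mono_exponent[OF M1] fourier_bound_mono_exponent[OF M2])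
        auto
    then show ?thesis by blast
  qed
  then show ?thesis
    unfolding decay_on_iff_fourier_bound by blast
qed

lemma decay_on_Union: "finite F \<Longrightarrow> (\<And>G. G \<in> F \<Longrightarrow> decay_on \<Omega> u G) \<Longrightarrow> decay_on \<Omega> u (\<Union>F)"
  by (induction F rule: finite_induct) (auto simp: decay_on_empty decay_on_Un)

lemma norm_integral_compact_support_le:
  fixes f :: "'a::euclidean_space \<Rightarrow> 'b::euclidean_space"
  assumes "compact K" "K \<subseteq> \<Omega>" "\<And>x. x \<in> \<Omega> \<Longrightarrow> x \<notin> K \<Longrightarrow> f x = 0"
    and "\<And>x. x \<in> K \<Longrightarrow> norm (f x) \<le> C" "0 \<le> C"
  shows "norm (integral \<Omega> f) \<le> C * measure lebesgue K"
proof -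
  have "(\<lambda>x. if x \<in> \<Omega> then f x else 0) = (\<lambda>x. if x \<in> K then f x else 0)"
    using assms(2,3) by (intro ext) auto
  then have restrict: "integral \<Omega> f = integral K f"
    by (metis (no_types) integral_restrict_UNIV)
  have K: "K \<in> lmeasurable"
    using assms(1) by (simp add: lmeasurable_compact)
  show ?thesis
  proof (cases "f integrable_on K")
    case True
    have "norm (integral K f) \<le> integral K (\<lambda>x. C)"
      using True integrable_on_const[OF K] assms(4) by (intro integral_norm_bound_integral) auto
    also have "\<dots> = C * measure lebesgue K"
      using lmeasure_integral[OF K] integral_cmul[of K C "\<lambda>x. 1::real"] by simp
    finally show ?thesis
      using restrict by simp
  next
    case False
    then show ?thesis
      using restrict assms(5) by (simp add: not_integrable_integral)
  qed
qed

lemma decay_on_zero: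
  assumes "u \<in> EM \<Omega>" "comp_supp_rep \<Omega> u"
  shows "decay_on \<Omega> u {0}"
proof -
  obtain K where K: "compact K" "K \<subseteq> \<Omega>" and vanish: "\<And>\<phi> x. x \<in> \<Omega> \<Longrightarrow> x \<notin> K \<Longrightarrow> u \<phi> x = 0"
    using assms(2) unfolding comp_supp_rep_def by blast
  obtain N :: nat where N: "\<forall>\<phi>\<in>An N. \<exists>c>0. \<exists>\<eta>>0. \<forall>\<epsilon>. 0 < \<epsilon> \<and> \<epsilon> < \<eta> \<longrightarrow>
      (\<forall>x\<in>K. cmod (pd [] (u (scale \<epsilon> \<phi>)) x) \<le> c * \<epsilon> powr (- real N))"
    using assms(1) K unfolding EM_def by blast
  have "fourier_bound \<Omega> u {0} N p \<phi>" if \<phi>: "\<phi> \<in> An N" for p \<phi>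
  proof -
    obtain c \<eta> where c: "c > 0" "\<eta> > 0" and bound: "\<forall>\<epsilon>. 0 < \<epsilon> \<and> \<epsilon> < \<eta> \<longrightarrow>
        (\<forall>x\<in>K. cmod (u (scale \<epsilon> \<phi>) x) \<le> c * \<epsilon> powr (- real N))"
      using N \<phi> by auto
    define C where "C = c * measure lebesgue K + 1"
    have "cmod (fourier \<Omega> (u (scale \<epsilon> \<phi>)) 0) \<le> C * \<epsilon> powr (- real N)"
      if "0 < \<epsilon>" "\<epsilon> < \<eta>" for \<epsilon>
    proof -
      have "fourier \<Omega> (u (scale \<epsilon> \<phi>)) 0 = integral \<Omega> (u (scale \<epsilon> \<phi>))"
        by (simp add: fourier_def)
      then have "cmod (fourier \<Omega> (u (scale \<epsilon> \<phi>)) 0) \<le> c * \<epsilon> powr (- real N) * measure lebesgue K"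
        using norm_integral_compact_support_le[OF K vanish, where C = "c * \<epsilon> powr (- real N)"] bound that c by simp
      also have "\<dots> \<le> C * \<epsilon> powr (- real N)"
        by (simp add: C_def algebra_simps)
      finally show ?thesis .
    qed
    moreover have "C > 0"
      using c by (simp add: C_def add_nonneg_pos)
    ultimately show ?thesis
      unfolding fourier_bound_def using c(2) by (intro exI[of _ C] conjI exI[of _ \<eta>]) auto
  qed
  then show ?thesis
    unfolding decay_on_iff_fourier_bound by blast
qed

lemma closed_cone_finite_conic_subcover:
  fixes \<Gamma> :: "'a::euclidean_space set"
  assumes "closed \<Gamma>" "cone \<Gamma>" "\<Gamma> - {0} \<subseteq> \<Union>T"
    and "\<And>G. G \<in> T \<Longrightarrow> open G \<and> (\<forall>\<xi>\<in>G. \<forall>t>0. t *\<^sub>R \<xi> \<in> G)"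
  obtains T' where "T' \<subseteq> T" "finite T'" "\<Gamma> - {0} \<subseteq> \<Union>T'"
proof -
  have "compact (sphere 0 1 \<inter> \<Gamma>)"
    using assms(1) by (intro compact_Int_closed) auto
  moreover have "sphere 0 1 \<inter> \<Gamma> \<subseteq> \<Union>T"
    using assms(3) by auto
  ultimately obtain T' where T': "T' \<subseteq> T" "finite T'" "sphere 0 1 \<inter> \<Gamma> \<subseteq> \<Union>T'"
    using assms(4) by (meson compactE)
  have "\<xi> \<in> \<Union>T'" if "\<xi> \<in> \<Gamma>" "\<xi> \<noteq> 0" for \<xi>
  proof -
    have "(1 / norm \<xi>) *\<^sub>R \<xi> \<in> sphere 0 1 \<inter> \<Gamma>"
      using that assms(2) by (simp add: cone_def)
    then obtain G where G: "G \<in> T'" "(1 / norm \<xi>) *\<^sub>R \<xi> \<in> G"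
      using T'(3) by blast
    moreover have "\<forall>t>0. t *\<^sub>R ((1 / norm \<xi>) *\<^sub>R \<xi>) \<in> G"
      using G T'(1) assms(4) by blast
    ultimately have "norm \<xi> *\<^sub>R ((1 / norm \<xi>) *\<^sub>R \<xi>) \<in> G"
      using that(2) by (meson zero_less_norm_iff)
    then show ?thesis
      using G(1) that(2) by auto
  qed
  then show thesis
    using that T' by blast
qed

theorem mainTheorem2:
  fixes \<Omega> :: "(real ^ 'n) set" and u :: "'n rep" and \<Gamma> :: "(real ^ 'n) set"
  assumes "open \<Omega>"
    and "u \<in> EM \<Omega>"
    and "comp_supp_rep \<Omega> u"
    and "closed \<Gamma>" and "cone \<Gamma>"
    and "\<Gamma> \<subseteq> - sigma_g \<Omega> u"
  shows "\<exists>N::nat. \<forall>p::nat. \<exists>M::nat. \<forall>\<phi>\<in>An M. \<exists>c>0. \<exists>\<epsilon>0>0.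
      \<forall>\<epsilon> \<xi>. 0 < \<epsilon> \<and> \<epsilon> < \<epsilon>0 \<and> \<xi> \<in> \<Gamma> \<longrightarrow>
        cmod (fourier \<Omega> (u (scale \<epsilon> \<phi>)) \<xi>) \<le> c * \<epsilon> powr (- real N) * (1 + norm \<xi>) powr (- real p)"
proof -
  define T where "T = {G. open G \<and> (\<forall>\<xi>\<in>G. \<forall>t>0. t *\<^sub>R \<xi> \<in> G) \<and> decay_on \<Omega> u G}"
  have cover: "\<Gamma> - {0} \<subseteq> \<Union>T"
    using assms(6) unfolding T_def sigma_g_def open_conic_nbhd_def by blast
  obtain T' where T': "T' \<subseteq> T" "finite T'" "\<Gamma> - {0} \<subseteq> \<Union>T'"
    by (rule closed_cone_finite_conic_subcover[OF assms(4,5) cover]) (simp add: T_def)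
  have "decay_on \<Omega> u ({0} \<union> \<Union>T')"
    using T' decay_on_zero[OF assms(2,3)] by (intro decay_on_Un decay_on_Union) (auto simp: T_def)
  moreover have "\<Gamma> \<subseteq> {0} \<union> \<Union>T'"
    using T'(3) by blast
  ultimately have "decay_on \<Omega> u \<Gamma>"
    by (rule decay_on_subset)
  then show ?thesis
    unfolding decay_on_def .
qed

end
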